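(* Let $q$ be a prime power, let $n\ge 5$, let $a$ be the smallest prime divisor of $n$, let $d$ be an integer with $2\le d<n-(n/a)$, and let $\ell$ be a common prime divisor of $n$ and $d$. Then $$\binom{n/\ell}{d/\ell}_q\cdot\frac{|\mathrm{GL}(d/\ell,q^\ell)|}{|\mathrm{GL}(d,q)|}\cdot\frac{|\mathrm{GL}(n/\ell-d/\ell,q^\ell)|}{|\mathrm{GL}(n-d,q)|}\le q^{-(\ell-1)^2-3}.$$
   Context: $\binom{N}{K}_q=\prod_{i=0}^{K-1}\frac{q^{N-i}-1}{q^{K-i}-1}$ is the $q$-binomial coefficient, and $\mathrm{GL}(k,r)$ is the general linear group of $k\times k$ invertible matrices over $\mathbb{F}_r$. *)

theory Defs
  imports Complex_Main "HOL-Computational_Algebra.Primes"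
begin

definition qbinom :: "nat \<Rightarrow> nat \<Rightarrow> real \<Rightarrow> real" where
  "qbinom N K q = (\<Prod>i<K. (q ^ (N - i) - 1) / (q ^ (K - i) - 1))"

definition GL_order :: "nat \<Rightarrow> nat \<Rightarrow> real" where
  "GL_order k r = (\<Prod>i<k. (real r ^ k - real r ^ i))"

definition prime_power :: "nat \<Rightarrow> bool" where
  "prime_power q \<longleftrightarrow> (\<exists>p k. prime p \<and> k \<ge> 1 \<and> q = p ^ k)"

end

theory Submission
  imports Defs
begin

(* Write n = l (D + E) and d = l D. The bounds r^(k(k-1)) <= |GL(k,r)| <= r^(k^2) and
  qbinom (D + E) D q <= q^((E+1) D) reduce the claim to an inequality between exponents, a
  polynomial inequality in l, D, E. It holds for l >= 3 unless D = E = 1, and for l = 2 when D < E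
  unless (D, E) = (1, 2). The minimality of a is used only for even n: then a = 2, so 2 d < n and
  D < E, which excludes D = E = 1 and, for l = 2, D >= E. The remaining case n = 6, d = 2, l = 2 is
  computed exactly: the product equals q^-5 (q - 1)^-3. *)

lemma GL_order_pos:
  assumes "r \<ge> 2"
  shows "GL_order k r > 0"
  unfolding GL_order_def
proof (rule prod_pos)
  fix i assume "i \<in> {..<k}"
  with assms have "real r ^ i < real r ^ k" by (intro power_strict_increasing) auto
  then show "0 < real r ^ k - real r ^ i" by simp
qed

lemma GL_order_nonneg:
  assumes "r \<ge> 1"
  shows "GL_order k r \<ge> 0"
  unfolding GL_order_def using assms by (intro prod_nonneg) (auto simp: power_increasing)

lemma GL_order_le_power:
  assumes "r \<ge> 1"
  shows "GL_order k r \<le> real r ^ (k\<^sup>2)"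
proof -
  have "GL_order k r \<le> (\<Prod>i<k. real r ^ k)"
    unfolding GL_order_def using assms by (intro prod_mono) (auto simp: power_increasing)
  also have "\<dots> = real r ^ (k\<^sup>2)" by (simp add: power2_eq_square power_mult)
  finally show ?thesis .
qed

lemma GL_order_ge_power:
  assumes "r \<ge> 2"
  shows "real r ^ (k * (k - 1)) \<le> GL_order k r"
proof -
  have "real r ^ (k - 1) \<le> real r ^ k - real r ^ i" if "i < k" for i
  proof -
    have "real r ^ i \<le> real r ^ (k - 1)" using assms that by (intro power_increasing) auto
    moreover have "real r ^ k = real r * real r ^ (k - 1)" using that by (simp flip: power_Suc)
    moreover have "2 * real r ^ (k - 1) \<le> real r * real r ^ (k - 1)" using assms by simp
    ultimately show ?thesis by linarith
  qed
  then have "(\<Prod>i<k. real r ^ (k - 1)) \<le> GL_order k r"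
    unfolding GL_order_def by (intro prod_mono) auto
  then show ?thesis by (metis power_mult mult.commute card_lessThan prod_constant)
qed

lemma qbinom_le_power:
  fixes x :: real
  assumes "x \<ge> 2"
  shows "qbinom (D + E) D x \<le> x ^ ((E + 1) * D)"
proof -
  have "(x ^ (D + E - i) - 1) / (x ^ (D - i) - 1) \<le> x ^ (E + 1)" if "i < D" for i
  proof -
    define y where "y = x ^ (D - i)"
    have "x \<le> y" unfolding y_def using assms that by (intro power_increasing[of 1, simplified]) auto
    then have "1 * 1 \<le> (x - 1) * (y - 1)" using assms by (intro mult_mono) auto
    then have "y \<le> x * y - x" by (simp add: algebra_simps)
    then have "x ^ E * y \<le> x ^ E * (x * y - x)" using assms by (intro mult_left_mono) auto
    moreover have "x ^ (D + E - i) = x ^ E * y"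
      unfolding y_def using that by (simp add: add.commute flip: power_add)
    moreover have "1 \<le> x ^ E" using assms by simp
    ultimately have "x ^ (D + E - i) - 1 \<le> x ^ (E + 1) * (y - 1)" by (simp add: algebra_simps)
    with \<open>x \<le> y\<close> assms show ?thesis unfolding y_def by (simp add: divide_le_eq)
  qed
  moreover have "0 \<le> (x ^ (D + E - i) - 1) / (x ^ (D - i) - 1)" if "i < D" for i
    using assms by simp
  ultimately have "qbinom (D + E) D x \<le> (\<Prod>i<D. x ^ (E + 1))"
    unfolding qbinom_def by (intro prod_mono) auto
  then show ?thesis by (metis power_mult card_lessThan prod_constant)
qed

lemma exponent_bound_two:
  fixes D E :: nat
  assumes "1 \<le> D" "D < E" "3 \<le> E"
  shows "(E + 1) * D + 2 * D\<^sup>2 + 2 * E\<^sup>2 + 4 + 2 * D + 2 * E \<le> (2 * D)\<^sup>2 + (2 * E)\<^sup>2"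
proof -
  have "(D + 1) * E \<le> E * E" "3 * E \<le> E * E" using assms by (intro mult_right_mono; simp)+
  then have "D * E + E \<le> E * E" "3 * E \<le> E * E" by simp_all
  moreover have "D \<le> D * D" by simp
  moreover have "(E + 1) * D + 2 * D\<^sup>2 + 2 * E\<^sup>2 + 4 + 2 * D + 2 * E
      = D * E + 3 * D + 2 * E + 4 + 2 * (D * D) + 2 * (E * E)"
    and "(2 * D)\<^sup>2 + (2 * E)\<^sup>2 = 4 * (D * D) + 4 * (E * E)"
    by (simp_all add: power2_eq_square algebra_simps)
  ultimately show ?thesis using assms by linarith
qed

lemma exponent_bound_three:
  fixes l D E :: nat
  assumes "3 \<le> l" "1 \<le> D" "1 \<le> E" "3 \<le> D + E"
  shows "(E + 1) * D + l * D\<^sup>2 + l * E\<^sup>2 + ((l - 1)\<^sup>2 + 3) + l * D + l * E \<le> (l * D)\<^sup>2 + (l * E)\<^sup>2"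
proof -
  define s where "s = int D ^ 2 + int E ^ 2"
  define t where "t = int l ^ 2 - 2 * int l"
  have "1 \<le> l" using assms by simp
  consider "2 \<le> int D" | "2 \<le> int E" using assms by linarith
  then have "2 * 2 \<le> int D * int D \<or> 2 * 2 \<le> int E * int E"
    by cases (metis mult_mono zero_le_numeral of_nat_0_le_iff)+
  moreover have "1 * 1 \<le> int D * int D" "1 * 1 \<le> int E * int E"
    using assms by (intro mult_mono; simp)+
  ultimately have s5: "5 \<le> s" unfolding s_def power2_eq_square by linarith
  have "3 * 1 \<le> int l * (int l - 2)" using assms by (intro mult_mono) auto
  then have t3: "3 \<le> t" unfolding t_def by (simp add: algebra_simps power2_eq_square)
  have "0 \<le> (int D - int E)\<^sup>2" by simp
  then have DE: "2 * (int D * int E) \<le> s" unfolding s_def by (simp add: power2_eq_square algebra_simps)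
  have "int D \<le> int D ^ 2" "int E \<le> int E ^ 2"
    by (metis le_square of_nat_le_iff of_nat_mult power2_eq_square)+
  moreover have "0 \<le> int E ^ 2" by simp
  ultimately have D: "int D \<le> s" and "int D + int E \<le> s" unfolding s_def by linarith+
  then have l_DE: "int l * (int D + int E) \<le> int l * s" by (simp add: mult_left_mono)
  (* Given 2 D E <= s, D <= s and D + E <= s, what remains is t + 4 <= (t - 3/2) s. *)
  have st: "0 \<le> (2 * t - 3) * (s - 5)" using s5 t3 by simp
  have "int ((E + 1) * D + l * D\<^sup>2 + l * E\<^sup>2 + ((l - 1)\<^sup>2 + 3) + l * D + l * E)
      = int D * int E + int D + int l * s + (int l ^ 2 - 2 * int l + 4) + int l * (int D + int E)"
    using assms unfolding s_def of_nat_add of_nat_mult of_nat_power of_nat_diff[OF \<open>1 \<le> l\<close>]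
    by (simp add: power2_eq_square algebra_simps)
  also have "\<dots> \<le> int l ^ 2 * s"
    using DE D l_DE st t3 unfolding t_def by (simp add: algebra_simps power2_eq_square)
  also have "\<dots> = int ((l * D)\<^sup>2 + (l * E)\<^sup>2)"
    unfolding s_def by (simp add: algebra_simps power2_eq_square)
  finally show ?thesis by linarith
qed

lemma qbinom_GL_ratio_exceptional:
  fixes q :: nat
  assumes "q \<ge> 2"
  shows "qbinom 3 1 (real q) * (GL_order 1 (q ^ 2) / GL_order 2 q) * (GL_order 2 (q ^ 2) / GL_order 4 q)
    = 1 / (real q ^ 5 * (real q - 1) ^ 3)"
proof -
  define x where "x = real q"
  have x: "x > 1" using assms unfolding x_def by simp
  have "qbinom 3 1 x = x\<^sup>2 + x + 1"
    using x unfolding qbinom_def by (simp add: power3_eq_cube power2_eq_square divide_simps algebra_simps)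
  moreover have "GL_order 1 (q ^ 2) = (x - 1) * (x + 1)"
    and "GL_order 2 q = x * (x - 1)\<^sup>2 * (x + 1)"
    and "GL_order 2 (q ^ 2) = x\<^sup>2 * (x - 1)\<^sup>2 * (x + 1)\<^sup>2 * (x\<^sup>2 + 1)"
    and "GL_order 4 q = x ^ 6 * (x - 1) ^ 4 * (x + 1)\<^sup>2 * (x\<^sup>2 + 1) * (x\<^sup>2 + x + 1)"
    unfolding GL_order_def x_def by (simp_all add: numeral_eq_Suc lessThan_Suc power2_eq_square algebra_simps)
  ultimately have "qbinom 3 1 x * (GL_order 1 (q ^ 2) / GL_order 2 q) * (GL_order 2 (q ^ 2) / GL_order 4 q)
    = (x\<^sup>2 + x + 1) * ((x - 1) * (x + 1) / (x * (x - 1)\<^sup>2 * (x + 1)))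
      * (x\<^sup>2 * (x - 1)\<^sup>2 * (x + 1)\<^sup>2 * (x\<^sup>2 + 1)
         / (x ^ 6 * (x - 1) ^ 4 * (x + 1)\<^sup>2 * (x\<^sup>2 + 1) * (x\<^sup>2 + x + 1)))"
    by (simp only:)
  also have "\<dots> = 1 / (x ^ 5 * (x - 1) ^ 3)"
  proof -
    have cancel: "z * (u * v / (x * u\<^sup>2 * v)) * (x\<^sup>2 * u\<^sup>2 * v\<^sup>2 * w / (x ^ 6 * u ^ 4 * v\<^sup>2 * w * z))
        = 1 / (x ^ 5 * u ^ 3)" if "u \<noteq> 0" "v \<noteq> 0" "w \<noteq> 0" "z \<noteq> 0" for u v w z
      using that \<open>x > 1\<close> by (simp add: field_simps eval_nat_numeral)
    have "x\<^sup>2 + x + 1 > 0" "x\<^sup>2 + 1 > 0" using x by (simp_all add: add_pos_pos)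
    with x show ?thesis by (intro cancel) auto
  qed
  finally show ?thesis unfolding x_def .
qed

lemma prime_power_ge_two:
  assumes "prime_power q"
  shows "2 \<le> q"
proof -
  obtain p k where p: "prime p" and "k \<ge> 1" and q: "q = p ^ k"
    using assms unfolding prime_power_def by blast
  then have "p ^ 1 \<le> p ^ k" using prime_ge_1_nat[OF p] by (intro power_increasing) auto
  with prime_ge_2_nat[OF p] show ?thesis unfolding q by simp
qed

lemma Min_prime_divisors_even:
  fixes n :: nat
  assumes "n \<noteq> 0" and "even n"
  shows "Min {p. prime p \<and> p dvd n} = 2"
proof (rule Min_eqI)
  have "{p. prime p \<and> p dvd n} \<subseteq> {..n}" using assms(1) by (auto dest: dvd_imp_le)
  then show "finite {p. prime p \<and> p dvd n}" by (rule finite_subset) simp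
  show "2 \<le> m" if "m \<in> {p. prime p \<and> p dvd n}" for m
    using that prime_ge_2_nat by blast
  show "2 \<in> {p. prime p \<and> p dvd n}"
    using assms(2) by simp
qed

lemma dvd_pair_decompose:
  fixes l n d :: nat
  assumes "l dvd n" and "l dvd d" and "0 < d" and "d < n"
  obtains D E where "n = l * (D + E)" and "d = l * D" and "1 \<le> D" and "1 \<le> E"
proof -
  obtain D N where d: "d = l * D" and n: "n = l * N" using assms(1,2) by (auto elim!: dvdE)
  with assms(3,4) have "1 \<le> D" and "D < N" by auto
  with n d show ?thesis using that[of D "N - D"] by simp
qed

lemma qbinom_GL_ratio_le_power:
  fixes q l D E c :: nat
  assumes q: "q \<ge> 2"
    and exponent: "(E + 1) * D + l * D\<^sup>2 + l * E\<^sup>2 + c + l * D + l * E \<le> (l * D)\<^sup>2 + (l * E)\<^sup>2"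
  shows "qbinom (D + E) D (real q) * (GL_order D (q ^ l) / GL_order (l * D) q)
           * (GL_order E (q ^ l) / GL_order (l * E) q) \<le> 1 / real q ^ c"
proof -
  define x where "x = real q"
  have x: "x \<ge> 2" unfolding x_def using q by simp
  have small: "GL_order k (q ^ l) \<le> x ^ (l * k\<^sup>2)" for k
    using GL_order_le_power[of "q ^ l" k] q by (simp add: x_def power_mult)
  have large: "x ^ (k * (k - 1)) \<le> GL_order k q" for k
    using GL_order_ge_power[OF q] by (simp add: x_def)
  have "(E + 1) * D + l * D\<^sup>2 + l * E\<^sup>2 + c \<le> l * D * (l * D - 1) + l * E * (l * E - 1)"
    using exponent by (simp add: power2_eq_square diff_mult_distrib2 le_square)
  then have exponent': "x ^ ((E + 1) * D + l * D\<^sup>2 + l * E\<^sup>2 + c)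
      \<le> x ^ (l * D * (l * D - 1) + l * E * (l * E - 1))"
    using x by (intro power_increasing) auto
  have "x ^ c * (qbinom (D + E) D x * GL_order D (q ^ l) * GL_order E (q ^ l))
      \<le> x ^ c * (x ^ ((E + 1) * D) * x ^ (l * D\<^sup>2) * x ^ (l * E\<^sup>2))"
    using qbinom_le_power[OF x] small[of D] small[of E] GL_order_nonneg[of "q ^ l"] q x
    by (intro mult_left_mono mult_mono) auto
  also have "\<dots> = x ^ ((E + 1) * D + l * D\<^sup>2 + l * E\<^sup>2 + c)"
    by (simp only: power_add mult_ac)
  also have "\<dots> \<le> x ^ (l * D * (l * D - 1)) * x ^ (l * E * (l * E - 1))"
    using exponent' by (simp only: power_add)
  also have "\<dots> \<le> GL_order (l * D) q * GL_order (l * E) q"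
    using large[of "l * D"] large[of "l * E"] GL_order_nonneg[of q] q x by (intro mult_mono) auto
  finally have "qbinom (D + E) D x * GL_order D (q ^ l) * GL_order E (q ^ l)
      / (GL_order (l * D) q * GL_order (l * E) q) \<le> 1 / x ^ c"
    using GL_order_pos[OF q] x by (simp add: divide_simps mult.commute)
  then show ?thesis by (simp add: x_def)
qed

lemma qbinom_GL_ratio_bound:
  fixes q l D E :: nat
  assumes q: "q \<ge> 2" and l: "l \<ge> 2" and "1 \<le> D" "1 \<le> E"
    and even: "even (l * (D + E)) \<Longrightarrow> D < E"
  shows "qbinom (D + E) D (real q) * (GL_order D (q ^ l) / GL_order (l * D) q)
           * (GL_order E (q ^ l) / GL_order (l * E) q) \<le> 1 / real q ^ ((l - 1)\<^sup>2 + 3)"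
proof -
  consider (exceptional) "l = 2" "D = 1" "E = 2" | (two) "l = 2" "D < E" "3 \<le> E"
    | (three) "3 \<le> l" "3 \<le> D + E"
  proof (cases "l = 2")
    case True
    with even have "D < E" by simp
    with True \<open>1 \<le> D\<close> show ?thesis using that(1,2) by (cases "D = 1 \<and> E = 2") auto
  next
    case False
    have "\<not> (D = 1 \<and> E = 1)" using even by auto
    with False l \<open>1 \<le> D\<close> \<open>1 \<le> E\<close> show ?thesis by (intro that(3)) auto
  qed
  then show ?thesis
  proof cases
    case exceptional
    then have "qbinom (D + E) D (real q) * (GL_order D (q ^ l) / GL_order (l * D) q)
        * (GL_order E (q ^ l) / GL_order (l * E) q) = 1 / (real q ^ 5 * (real q - 1) ^ 3)"
      using qbinom_GL_ratio_exceptional[OF q] by (simp add: numeral_3_eq_3)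
    also have "\<dots> \<le> 1 / (real q ^ 4 * 1)"
      using q by (intro divide_left_mono mult_mono power_increasing) auto
    also have "\<dots> = 1 / real q ^ ((l - 1)\<^sup>2 + 3)"
      using exceptional by simp
    finally show ?thesis .
  next
    case two
    then have "(E + 1) * D + l * D\<^sup>2 + l * E\<^sup>2 + ((l - 1)\<^sup>2 + 3) + l * D + l * E \<le> (l * D)\<^sup>2 + (l * E)\<^sup>2"
      using exponent_bound_two[OF \<open>1 \<le> D\<close>] by simp
    then show ?thesis by (rule qbinom_GL_ratio_le_power[OF q])
  next
    case three
    then show ?thesis using qbinom_GL_ratio_le_power[OF q exponent_bound_three] assms by blast
  qed
qed

theorem lemma5p3:
  fixes q n d a l :: nat
  assumes "prime_power q"
    and "n \<ge> 5"
    and "a = Min {p. prime p \<and> p dvd n}"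
    and "2 \<le> d" and "real d < real n - real n / real a"
    and "prime l" and "l dvd n" and "l dvd d"
  shows "qbinom (n div l) (d div l) (real q) * (GL_order (d div l) (q ^ l) / GL_order d q)
           * (GL_order (n div l - d div l) (q ^ l) / GL_order (n - d) q)
         \<le> real q powr (- ((real l - 1) ^ 2) - 3)"
proof -
  have q: "q \<ge> 2" using assms(1) by (rule prime_power_ge_two)
  have l: "l \<ge> 2" using assms(6) by (rule prime_ge_2_nat)
  have "real n / real a \<ge> 0" by simp
  then have "d < n" using assms(5) by linarith
  moreover have "0 < d" using assms(4) by simp
  ultimately obtain D E where n: "n = l * (D + E)" and d: "d = l * D" and "1 \<le> D" "1 \<le> E"
    using dvd_pair_decompose[OF assms(7,8)] by blast
  have "D < E" if "even (l * (D + E))"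
  proof -
    have "even n" using that n by simp
    then have "a = 2" using Min_prime_divisors_even[of n] assms(2,3) by simp
    then have "2 * d < n" using assms(5) by simp
    then show ?thesis using n d by simp
  qed
  then have bound: "qbinom (D + E) D (real q) * (GL_order D (q ^ l) / GL_order (l * D) q)
      * (GL_order E (q ^ l) / GL_order (l * E) q) \<le> 1 / real q ^ ((l - 1)\<^sup>2 + 3)"
    using qbinom_GL_ratio_bound[OF q l \<open>1 \<le> D\<close> \<open>1 \<le> E\<close>] by blast
  have "- ((real l - 1) ^ 2) - 3 = - real ((l - 1)\<^sup>2 + 3)"
    using l by (simp add: of_nat_diff)
  then have rhs: "real q powr (- ((real l - 1) ^ 2) - 3) = 1 / real q ^ ((l - 1)\<^sup>2 + 3)"
    using q by (simp only: powr_minus_divide powr_realpow of_nat_0_less_iff)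
  have "n div l = D + E" "d div l = D" "n - d = l * E"
    using n d l by (simp_all add: algebra_simps)
  then show ?thesis unfolding rhs using bound d by simp
qed

end
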